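(* If $z\in\mathcal F_\mathbb Z$ is FPF-Grassmannian and $E\subset\mathbb Z$ is a finite set with $z(E)=E$, then $[[z]]_E$ is FPF-Grassmannian.
   Context: Let $S_\mathbb Z$ be the group of finitely supported permutations of $\mathbb Z$. Let $\Theta(i)=i-(-1)^i$ and $\mathcal F_\mathbb Z=\{w^{-1}\Theta w:w\in S_\mathbb Z\}$. $\mathcal I(z)$ is the involution whose nontrivial cycles are exactly the cycles $(p,q)$ of $z$ with $p<q$ for which some cycle $(a,b)$ of $z$ with $a<b$ satisfies $p<b<q$. An involution is I-Grassmannian if it is $1$ or $(\phi_1,n+1)\cdots(\phi_r,n+r)$ with $r\ge1$ and integers $\phi_1<\cdots<\phi_r\le n$. The element $z$ is FPF-Grassmannian if $\mathcal I(z)$ is I-Grassmannian. For a finite $E$ of size $m$ with $z(E)=E$, let $\phi_E:[m]\to E$ and $\psi_E:E\to[m]$ be the order-preserving bijections. Set $[z]_E=\psi_E\circ z\circ\phi_E$. Let $[[z]]_E\in\mathcal F_\mathbb Z$ agree with $[z]_E$ on $[m]$ and with $\Theta$ outside $[m]$. *)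

theory Defs
  imports Main
begin

definition SZ :: "(int \<Rightarrow> int) set" where
  "SZ = {w. bij w \<and> finite {i. w i \<noteq> i}}"

definition Theta :: "int \<Rightarrow> int" where
  "Theta i = i - (if even i then 1 else -1)"

definition FZ :: "(int \<Rightarrow> int) set" where
  "FZ = {inv w \<circ> Theta \<circ> w | w. w \<in> SZ}"

definition Icyc :: "(int \<Rightarrow> int) \<Rightarrow> int \<Rightarrow> int \<Rightarrow> bool" where
  "Icyc z p q \<longleftrightarrow> z p = q \<and> z q = p \<and> p < q \<and>
     (\<exists>a b. z a = b \<and> z b = a \<and> a < b \<and> p < b \<and> b < q)"

definition Iinv :: "(int \<Rightarrow> int) \<Rightarrow> int \<Rightarrow> int" where
  "Iinv z i = (if Icyc z i (z i) \<or> Icyc z (z i) i then z i else i)"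

text \<open>I-Grassmannian: 1, or (phi_1,n+1)...(phi_r,n+r) with r>=1, phi_1<...<phi_r<=n,
  written out as a function (the transpositions are disjoint).\<close>
definition I_grassmannian :: "(int \<Rightarrow> int) \<Rightarrow> bool" where
  "I_grassmannian y \<longleftrightarrow> y = id \<or>
     (\<exists>(n::int) (r::nat) (phi::nat \<Rightarrow> int). r \<ge> 1 \<and> strict_mono_on {1..r} phi \<and> phi r \<le> n \<and>
        (\<forall>j\<in>{1..r}. y (phi j) = n + int j \<and> y (n + int j) = phi j) \<and>
        (\<forall>i. i \<notin> phi ` {1..r} \<and> i \<notin> {n + 1..n + int r} \<longrightarrow> y i = i))"

definition FPF_grassmannian :: "(int \<Rightarrow> int) \<Rightarrow> bool" where
  "FPF_grassmannian z \<longleftrightarrow> z \<in> FZ \<and> I_grassmannian (Iinv z)"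

definition phiE :: "int set \<Rightarrow> int \<Rightarrow> int" where
  "phiE E i = sorted_list_of_set E ! nat (i - 1)"

definition psiE :: "int set \<Rightarrow> int \<Rightarrow> int" where
  "psiE E = the_inv_into {1..int (card E)} (phiE E)"

definition restrict_std :: "(int \<Rightarrow> int) \<Rightarrow> int set \<Rightarrow> int \<Rightarrow> int" where
  "restrict_std z E i = (if 1 \<le> i \<and> i \<le> int (card E) then psiE E (z (phiE E i)) else Theta i)"

end

theory Submission
  imports Defs "HOL-Combinatorics.Transposition"
begin

text \<open>
  Since E is a union of 2-cycles of the fixed-point-free involution z, card E is even, so
  [[z]]_E is a fixed-point-free involution that agrees with Theta outside [1, card E]; such
  involutions lie in F_Z, as one disagreement with Theta at a time can be removed by
  conjugating with a transposition.

  An involution is I-Grassmannian exactly when its descents (the q with y q < q) form a finite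
  interval lying to the right of all its ascents, on which it is increasing. The order-preserving
  map phi_E intertwines [[z]]_E with z, so it carries every cycle of I([[z]]_E) to a cycle of
  I(z) (the nesting cycle of the definition of I comes along); hence these three properties of
  I(z) are inherited by I([[z]]_E).
\<close>

lemma Theta_Theta [simp]: "Theta (Theta i) = i"
  unfolding Theta_def by auto

lemma Theta_neq: "Theta i \<noteq> i"
  unfolding Theta_def by auto

lemma Theta_eq_Theta_iff [simp]: "Theta i = Theta j \<longleftrightarrow> i = j"
  by (metis Theta_Theta)

lemma phiE_strict_mono:
  assumes "finite E"
  shows "strict_mono_on {1..int (card E)} (phiE E)"
proof (rule strict_mono_onI)
  fix i j assume "i \<in> {1..int (card E)}" "j \<in> {1..int (card E)}" "i < j"
  then show "phiE E i < phiE E j"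
    unfolding phiE_def using assms
    by (intro sorted_wrt_nth_less[OF strict_sorted_list_of_set]) auto
qed

lemma phiE_image:
  assumes "finite E"
  shows "phiE E ` {1..int (card E)} = E"
proof -
  let ?xs = "sorted_list_of_set E"
  have shift: "(\<lambda>i. nat (i - 1)) ` {1..int (card E)} = {0..<card E}"
    by (auto simp: image_iff intro!: bexI[where x = "int _ + 1"])
  have "phiE E ` {1..int (card E)} = nth ?xs ` {0..<length ?xs}"
    unfolding phiE_def image_image[symmetric, of "nth ?xs" "\<lambda>i. nat (i - 1)"] shift by simp
  also have "\<dots> = E" using assms by (simp add: nth_image)
  finally show ?thesis .
qed

lemma phiE_bij_betw:
  assumes "finite E"
  shows "bij_betw (phiE E) {1..int (card E)} E"
  using strict_mono_on_imp_inj_on[OF phiE_strict_mono[OF assms]] phiE_image[OF assms]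
  by (simp add: bij_betw_def)

lemma
  assumes "finite E" "x \<in> E"
  shows psiE_mem: "psiE E x \<in> {1..int (card E)}" and phiE_psiE: "phiE E (psiE E x) = x"
  using bij_betw_the_inv_into[OF phiE_bij_betw[OF assms(1)]]
    f_the_inv_into_f_bij_betw[OF phiE_bij_betw[OF assms(1)]] assms(2)
  unfolding psiE_def by (auto simp: bij_betw_def)

lemma Theta_diff_transpose_conj:
  assumes inv: "\<And>k. y (y k) = k" and fpf: "\<And>k. y k \<noteq> k" and i: "y i \<noteq> Theta i"
  shows "{k. (transpose (y i) (Theta i) \<circ> y \<circ> transpose (y i) (Theta i)) k \<noteq> Theta k}
           \<subseteq> {k. y k \<noteq> Theta k} - {i}"
proof
  fix k
  define j t where "j = y i" and "t = Theta i"
  have ij: "i \<noteq> j" "i \<noteq> t" "j \<noteq> t" "y j = i" "Theta t = i"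
    using fpf[of i] Theta_neq[of i] i inv unfolding j_def t_def by auto
  assume k: "k \<in> {k. (transpose j t \<circ> y \<circ> transpose j t) k \<noteq> Theta k}"
  consider "k = i" | "k = j" | "k = t" | "k \<noteq> i" "k \<noteq> j" "k \<noteq> t" by blast
  then show "k \<in> {k. y k \<noteq> Theta k} - {i}"
  proof cases
    case 1
    then show ?thesis using k ij by (simp add: j_def t_def)
  next
    case 2
    have "Theta j \<noteq> i" using ij(3,5) by auto
    then show ?thesis using 2 ij by simp
  next
    case 3
    then show ?thesis using k ij by simp
  next
    case 4
    then have "y k \<noteq> j" using ij inv by metis
    show ?thesis
    proof (cases "y k = t")
      case True
      then have "y k \<noteq> Theta k" using 4 ij by (metis Theta_Theta)
      then show ?thesis using 4 by simp
    next
      case False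
      then have "(transpose j t \<circ> y \<circ> transpose j t) k = y k"
        using 4 \<open>y k \<noteq> j\<close> by simp
      then show ?thesis using k 4 by simp
    qed
  qed
qed

lemma SZ_comp:
  assumes "v \<in> SZ" "w \<in> SZ"
  shows "v \<circ> w \<in> SZ"
proof -
  have "{i. (v \<circ> w) i \<noteq> i} \<subseteq> {i. v i \<noteq> i} \<union> {i. w i \<noteq> i}" by auto
  moreover have "finite ({i. v i \<noteq> i} \<union> {i. w i \<noteq> i})"
    using assms unfolding SZ_def by simp
  ultimately have "finite {i. (v \<circ> w) i \<noteq> i}" by (rule finite_subset)
  then show ?thesis using assms unfolding SZ_def by (simp add: bij_comp)
qed

lemma transpose_in_SZ: "transpose a b \<in> SZ"
proof -
  have "{i. transpose a b i \<noteq> i} \<subseteq> {a, b}" by (auto simp: transpose_def)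
  then have "finite {i. transpose a b i \<noteq> i}" by (rule finite_subset) simp
  then show ?thesis unfolding SZ_def by simp
qed

lemma FZ_conj:
  assumes "w \<in> SZ" "y \<in> FZ"
  shows "inv w \<circ> y \<circ> w \<in> FZ"
proof -
  obtain v where v: "v \<in> SZ" "y = inv v \<circ> Theta \<circ> v" using assms(2) unfolding FZ_def by auto
  have "inv (v \<circ> w) = inv w \<circ> inv v"
    using v(1) assms(1) unfolding SZ_def by (simp add: o_inv_distrib)
  then have "inv w \<circ> y \<circ> w = inv (v \<circ> w) \<circ> Theta \<circ> (v \<circ> w)"
    using v(2) by (simp add: comp_assoc)
  then show ?thesis using SZ_comp[OF v(1) assms(1)] unfolding FZ_def by blast
qed

lemma
  assumes "y \<in> FZ"
  shows FZ_involution: "y (y i) = i" and FZ_no_fixpoint: "y i \<noteq> i"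
proof -
  obtain w where y: "y = inv w \<circ> Theta \<circ> w" and w: "bij w"
    using assms unfolding FZ_def SZ_def by auto
  have w_inv: "w (inv w k) = k" "inv w (w k) = k" for k
    using w by (simp_all add: bij_is_inj bij_is_surj surj_f_inv_f)
  show "y (y i) = i" unfolding y by (simp add: w_inv)
  show "y i \<noteq> i"
  proof
    assume "y i = i"
    then have "Theta (w i) = w i" unfolding y using w_inv(1) by (metis comp_apply)
    then show False using Theta_neq by blast
  qed
qed

lemma FZ_intro:
  assumes "finite {i. y i \<noteq> Theta i}" and "\<And>i. y (y i) = i" and "\<And>i. y i \<noteq> i"
  shows "y \<in> FZ"
  using assms
proof (induction "card {i. y i \<noteq> Theta i}" arbitrary: y rule: less_induct)
  case less
  show ?case
  proof (cases "{i. y i \<noteq> Theta i} = {}")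
    case True
    then have "y = inv id \<circ> Theta \<circ> id" by auto
    moreover have "id \<in> SZ" unfolding SZ_def by simp
    ultimately show ?thesis unfolding FZ_def by blast
  next
    case False
    then obtain i where i: "y i \<noteq> Theta i" by auto
    define \<tau> where "\<tau> = transpose (y i) (Theta i)"
    define y' where "y' = \<tau> \<circ> y \<circ> \<tau>"
    have sub: "{k. y' k \<noteq> Theta k} \<subseteq> {k. y k \<noteq> Theta k} - {i}"
      unfolding y'_def \<tau>_def using Theta_diff_transpose_conj less.prems i by blast
    then have fin': "finite {k. y' k \<noteq> Theta k}"
      using less.prems(1) by (meson finite_Diff finite_subset)
    have "card {k. y' k \<noteq> Theta k} \<le> card ({k. y k \<noteq> Theta k} - {i})"
      using less.prems(1) sub by (simp add: card_mono)
    also have "\<dots> < card {k. y k \<noteq> Theta k}"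
      using less.prems(1) i by (intro card_Diff1_less) auto
    finally have card_less: "card {k. y' k \<noteq> Theta k} < card {k. y k \<noteq> Theta k}" .
    have "y' (y' k) = k" for k
      unfolding y'_def \<tau>_def using less.prems(2) by simp
    moreover have "y' k \<noteq> k" for k
      unfolding y'_def \<tau>_def using less.prems(3) by (metis comp_apply transpose_involutory)
    ultimately have "y' \<in> FZ" by (rule less.hyps[OF card_less fin'])
    moreover have "y = inv \<tau> \<circ> y' \<circ> \<tau>" unfolding y'_def \<tau>_def by (simp add: fun_eq_iff)
    moreover have "inv \<tau> \<circ> y' \<circ> \<tau> \<in> FZ"
      unfolding \<tau>_def using transpose_in_SZ \<open>y' \<in> FZ\<close> by (rule FZ_conj)
    ultimately show ?thesis by simp
  qed
qed

lemma even_card_if_fpf_involution_invariant: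
  fixes z :: "'a::linorder \<Rightarrow> 'a"
  assumes "finite E" and closed: "\<And>x. x \<in> E \<Longrightarrow> z x \<in> E"
    and inv: "\<And>i. z (z i) = i" and fpf: "\<And>i. z i \<noteq> i"
  shows "even (card E)"
proof -
  define A where "A = {x \<in> E. x < z x}"
  have "z ` A = {x \<in> E. z x < x}"
  proof (intro equalityI subsetI)
    fix x assume "x \<in> {x \<in> E. z x < x}"
    then have "z x \<in> A" "x = z (z x)" unfolding A_def using closed inv by auto
    then show "x \<in> z ` A" by blast
  qed (auto simp: A_def inv closed)
  then have "E = A \<union> z ` A" and "A \<inter> z ` A = {}"
    unfolding A_def using fpf by (auto simp: neq_iff)
  moreover have "card (z ` A) = card A"
    using inv by (metis card_image inj_on_inverseI)
  moreover have "finite A" using assms(1) unfolding A_def by simp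
  ultimately have "card E = card A + card A" by (metis card_Un_disjoint finite_imageI)
  then show ?thesis by simp
qed

lemma Iinv_involution: "(\<And>i. y (y i) = i) \<Longrightarrow> Iinv y (Iinv y i) = i"
  unfolding Iinv_def by auto

lemma Iinv_eq_if_moved: "Iinv y i \<noteq> i \<Longrightarrow> Iinv y i = y i"
  unfolding Iinv_def by auto

lemma Iinv_less_iff: "(\<And>i. y (y i) = i) \<Longrightarrow> Iinv y q < q \<longleftrightarrow> Icyc y (y q) q"
  unfolding Iinv_def Icyc_def by auto

lemma less_Iinv_iff: "(\<And>i. y (y i) = i) \<Longrightarrow> p < Iinv y p \<longleftrightarrow> Icyc y p (y p)"
  unfolding Iinv_def Icyc_def by auto

lemma I_grassmannian_id: "I_grassmannian id"
  unfolding I_grassmannian_def by simp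

lemma involution_eq_id_if_no_descents:
  fixes Y :: "'a::linorder \<Rightarrow> 'a"
  assumes "\<And>i. Y (Y i) = i" and "\<And>q. \<not> Y q < q"
  shows "Y = id"
proof
  fix i
  show "Y i = id i" using assms(2)[of i] assms(2)[of "Y i"] assms(1)[of i] by auto
qed

lemma finite_convex_int_set_eq_interval:
  fixes S :: "int set"
  assumes "finite S" "S \<noteq> {}"
    and convex: "\<And>a b x. a \<in> S \<Longrightarrow> b \<in> S \<Longrightarrow> a < x \<Longrightarrow> x < b \<Longrightarrow> x \<in> S"
  shows "S = {Min S..Max S}"
proof (intro equalityI subsetI)
  fix x assume "x \<in> {Min S..Max S}"
  moreover have "Min S \<in> S" "Max S \<in> S" using assms by simp_all
  ultimately show "x \<in> S"
    using convex[of "Min S" "Max S" x] by (cases "x = Min S \<or> x = Max S") auto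
qed (use \<open>finite S\<close> in simp)

lemma
  fixes Y :: "int \<Rightarrow> int" and phi :: "nat \<Rightarrow> int"
  assumes mono: "strict_mono_on {1..r} phi" and "phi r \<le> n"
    and cyc: "\<forall>j\<in>{1..r}. Y (phi j) = n + int j \<and> Y (n + int j) = phi j"
    and rest: "\<forall>i. i \<notin> phi ` {1..r} \<and> i \<notin> {n + 1..n + int r} \<longrightarrow> Y i = i"
  shows grassmannian_form_involution: "Y (Y i) = i"
    and grassmannian_form_descent_iff: "Y q < q \<longleftrightarrow> q \<in> {n + 1..n + int r}"
    and grassmannian_form_ascent_le: "p < Y p \<Longrightarrow> p \<le> n"
    and grassmannian_form_descent_eq: "q \<in> {n + 1..n + int r} \<Longrightarrow> Y q = phi (nat (q - n))"
proof -
  have phi_le: "phi j \<le> n" if "j \<in> {1..r}" for j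
    using strict_mono_on_leD[OF mono, of j r] that \<open>phi r \<le> n\<close> by auto
  have descent_index: "nat (q - n) \<in> {1..r}" "n + int (nat (q - n)) = q"
    if "q \<in> {n + 1..n + int r}" for q
    using that by auto
  show descent_eq: "Y q = phi (nat (q - n))" if "q \<in> {n + 1..n + int r}" for q
    using cyc descent_index[OF that] by metis
  show "Y (Y i) = i"
  proof (cases "i \<in> {n + 1..n + int r}")
    case True
    then show ?thesis using cyc descent_index[OF True] by metis
  next
    case False
    then show ?thesis using cyc rest by (cases "i \<in> phi ` {1..r}") auto
  qed
  have descent_iff: "Y q < q \<longleftrightarrow> q \<in> {n + 1..n + int r}" for q
  proof
    assume "q \<in> {n + 1..n + int r}"
    then show "Y q < q" using descent_eq phi_le descent_index by fastforce
  next
    assume "Y q < q"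
    show "q \<in> {n + 1..n + int r}"
    proof (rule ccontr)
      assume "q \<notin> {n + 1..n + int r}"
      then have "q \<in> phi ` {1..r}" using rest \<open>Y q < q\<close> by (metis less_irrefl)
      then obtain j where "j \<in> {1..r}" "q = phi j" by blast
      then show False using cyc phi_le \<open>Y q < q\<close> by fastforce
    qed
  qed
  then show "Y q < q \<longleftrightarrow> q \<in> {n + 1..n + int r}" .
  show "p \<le> n" if "p < Y p"
  proof -
    have "p \<notin> {n + 1..n + int r}" using descent_iff[of p] that by simp
    then have "p \<in> phi ` {1..r}" using rest that by (metis less_irrefl)
    then show ?thesis using phi_le by blast
  qed
qed

lemma I_grassmannian_obtain_form:
  fixes Y :: "int \<Rightarrow> int"
  assumes "I_grassmannian Y"
  obtains n r phi where "strict_mono_on {1..r} phi" "phi r \<le> n"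
    "\<forall>j\<in>{1..r}. Y (phi j) = n + int j \<and> Y (n + int j) = phi j"
    "\<forall>i. i \<notin> phi ` {1..r} \<and> i \<notin> {n + 1..n + int r} \<longrightarrow> Y i = i"
proof (cases "Y = id")
  case True
  show ?thesis
    by (rule that[where n = 0 and r = 0 and phi = "\<lambda>_. 0"]) (simp_all add: True strict_mono_on_def)
next
  case False
  then obtain n r phi where "strict_mono_on {1..r} phi" "phi r \<le> n"
    "\<forall>j\<in>{1..r}. Y (phi j) = n + int j \<and> Y (n + int j) = phi j"
    "\<forall>i. i \<notin> phi ` {1..r} \<and> i \<notin> {n + 1..n + int r} \<longrightarrow> Y i = i"
    using assms unfolding I_grassmannian_def by blast
  then show ?thesis by (rule that)
qed

lemma
  fixes Y :: "int \<Rightarrow> int"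
  assumes "I_grassmannian Y"
  shows I_grassmannian_involution: "Y (Y i) = i"
    and I_grassmannian_descents_convex: "Y q < q \<Longrightarrow> Y q' < q' \<Longrightarrow> q < x \<Longrightarrow> x < q' \<Longrightarrow> Y x < x"
    and I_grassmannian_ascent_less_descent: "p < Y p \<Longrightarrow> Y q < q \<Longrightarrow> p < q"
    and I_grassmannian_descents_mono: "Y q < q \<Longrightarrow> Y q' < q' \<Longrightarrow> q < q' \<Longrightarrow> Y q < Y q'"
proof -
  obtain n r phi where form: "strict_mono_on {1..r} phi" "phi r \<le> n"
    "\<forall>j\<in>{1..r}. Y (phi j) = n + int j \<and> Y (n + int j) = phi j"
    "\<forall>i. i \<notin> phi ` {1..r} \<and> i \<notin> {n + 1..n + int r} \<longrightarrow> Y i = i"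
    by (rule I_grassmannian_obtain_form[OF assms])
  note descent_iff = grassmannian_form_descent_iff[OF form]
  show "Y (Y i) = i" by (rule grassmannian_form_involution[OF form])
  show "Y q < q \<Longrightarrow> Y q' < q' \<Longrightarrow> q < x \<Longrightarrow> x < q' \<Longrightarrow> Y x < x"
    using descent_iff by simp
  show "p < Y p \<Longrightarrow> Y q < q \<Longrightarrow> p < q"
    using grassmannian_form_ascent_le[OF form] descent_iff by force
  assume "Y q < q" "Y q' < q'" "q < q'"
  then have "nat (q - n) < nat (q' - n)" "nat (q - n) \<in> {1..r}" "nat (q' - n) \<in> {1..r}"
    using descent_iff by auto
  then show "Y q < Y q'"
    using \<open>Y q < q\<close> \<open>Y q' < q'\<close> descent_iff grassmannian_form_descent_eq[OF form]
      strict_mono_onD[OF form(1)] by simp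
qed

lemma I_grassmannianI:
  fixes Y :: "int \<Rightarrow> int"
  assumes inv: "\<And>i. Y (Y i) = i"
    and descents_finite: "finite {q. Y q < q}"
    and convex: "\<And>q q' x. Y q < q \<Longrightarrow> Y q' < q' \<Longrightarrow> q < x \<Longrightarrow> x < q' \<Longrightarrow> Y x < x"
    and ascent_less_descent: "\<And>p q. p < Y p \<Longrightarrow> Y q < q \<Longrightarrow> p < q"
    and mono: "\<And>q q'. Y q < q \<Longrightarrow> Y q' < q' \<Longrightarrow> q < q' \<Longrightarrow> Y q < Y q'"
  shows "I_grassmannian Y"
proof (cases "{q. Y q < q} = {}")
  case True
  then have "Y = id" using involution_eq_id_if_no_descents[OF inv] by blast
  then show ?thesis by (simp add: I_grassmannian_id)
next
  case False
  define a b where "a = Min {q. Y q < q}" and "b = Max {q. Y q < q}"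
  have "{q. Y q < q} = {a..b}"
    unfolding a_def b_def
    by (rule finite_convex_int_set_eq_interval[OF descents_finite False]) (use convex in blast)
  then have "a \<le> b" using False by auto
  define n r phi where "n = a - 1" and "r = nat (b - a + 1)" and "phi = (\<lambda>j::nat. Y (n + int j))"
  have "{a..b} = {n + 1..n + int r}" using \<open>a \<le> b\<close> unfolding n_def r_def by auto
  with \<open>{q. Y q < q} = {a..b}\<close> have descent_iff: "Y q < q \<longleftrightarrow> q \<in> {n + 1..n + int r}" for q
    by blast
  have "r \<ge> 1" using \<open>a \<le> b\<close> unfolding r_def by simp
  have "strict_mono_on {1..r} phi"
  proof (rule strict_mono_onI)
    fix j j' :: nat assume "j \<in> {1..r}" "j' \<in> {1..r}" "j < j'"
    then show "phi j < phi j'" unfolding phi_def using mono descent_iff by simp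
  qed
  moreover have "phi r \<le> n"
  proof -
    have "Y (n + int r) < n + int r" "Y (n + 1) < n + 1"
      using descent_iff[of "n + int r"] descent_iff[of "n + 1"] \<open>r \<ge> 1\<close> by simp_all
    then have "Y (n + int r) < n + 1" using ascent_less_descent inv by metis
    then show ?thesis unfolding phi_def by simp
  qed
  moreover have "\<forall>j\<in>{1..r}. Y (phi j) = n + int j \<and> Y (n + int j) = phi j"
    unfolding phi_def using inv by simp
  moreover have "Y i = i" if "i \<notin> phi ` {1..r}" "i \<notin> {n + 1..n + int r}" for i
  proof (rule ccontr)
    assume "Y i \<noteq> i"
    moreover have "\<not> Y i < i" using that(2) descent_iff by blast
    ultimately have "Y (Y i) < Y i" using inv[of i] by simp
    then have "Y i \<in> {n + 1..n + int r}" using descent_iff by blast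
    then have "nat (Y i - n) \<in> {1..r}" "phi (nat (Y i - n)) = i"
      unfolding phi_def using inv by auto
    then show False using that(1) by (metis image_eqI)
  qed
  ultimately show ?thesis
    unfolding I_grassmannian_def using \<open>r \<ge> 1\<close>
    by (intro disjI2 exI[of _ n] exI[of _ r] exI[of _ phi]) simp
qed

context
  fixes y z \<phi> :: "int \<Rightarrow> int" and lo hi :: int
  assumes y_inv: "\<And>i. y (y i) = i" and z_inv: "\<And>i. z (z i) = i"
    and mono: "strict_mono_on {lo..hi} \<phi>"
    and maps: "\<And>i. i \<in> {lo..hi} \<Longrightarrow> y i \<in> {lo..hi}"
    and commute: "\<And>i. i \<in> {lo..hi} \<Longrightarrow> \<phi> (y i) = z (\<phi> i)"
    and cycles_inside: "\<And>p q. Icyc y p q \<Longrightarrow> p \<in> {lo..hi}"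
begin

lemma Icyc_pullback:
  assumes "Icyc y p q"
  shows "p \<in> {lo..hi}" "q \<in> {lo..hi}" "Icyc z (\<phi> p) (\<phi> q)"
proof -
  obtain a b where cyc: "y p = q" "y q = p" "p < q" and
    inner: "y a = b" "y b = a" "a < b" "p < b" "b < q"
    using assms unfolding Icyc_def by blast
  show p: "p \<in> {lo..hi}" using cycles_inside[OF assms] .
  then show q: "q \<in> {lo..hi}" using maps cyc(1) by metis
  have b: "b \<in> {lo..hi}" using p q inner by auto
  then have a: "a \<in> {lo..hi}" using maps inner(2) by metis
  have "z (\<phi> p) = \<phi> q" "z (\<phi> q) = \<phi> p" "z (\<phi> a) = \<phi> b" "z (\<phi> b) = \<phi> a"
    using commute p q a b cyc inner by metis+
  moreover have "\<phi> p < \<phi> q" "\<phi> a < \<phi> b" "\<phi> p < \<phi> b" "\<phi> b < \<phi> q"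
    using strict_mono_on_less[OF mono] p q a b cyc inner by simp_all
  ultimately show "Icyc z (\<phi> p) (\<phi> q)" unfolding Icyc_def by blast
qed

lemma Iinv_descent_pullback:
  assumes "Iinv y q < q"
  shows "q \<in> {lo..hi}" "y q \<in> {lo..hi}" "Iinv y q = y q"
    "Iinv z (\<phi> q) = \<phi> (y q)" "Iinv z (\<phi> q) < \<phi> q"
proof -
  have cyc: "Icyc y (y q) q" using assms Iinv_less_iff y_inv by blast
  show q: "q \<in> {lo..hi}" and "y q \<in> {lo..hi}" using Icyc_pullback[OF cyc] by simp_all
  show "Iinv y q = y q" using assms Iinv_eq_if_moved by force
  have "Icyc z (z (\<phi> q)) (\<phi> q)" using Icyc_pullback(3)[OF cyc] commute[OF q] by simp
  then have "Iinv z (\<phi> q) < \<phi> q" using Iinv_less_iff z_inv by blast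
  then show "Iinv z (\<phi> q) < \<phi> q" "Iinv z (\<phi> q) = \<phi> (y q)"
    using Iinv_eq_if_moved commute[OF q] by force+
qed

lemma Iinv_ascent_pullback:
  assumes "p < Iinv y p"
  shows "p \<in> {lo..hi}" "\<phi> p < Iinv z (\<phi> p)"
proof -
  have cyc: "Icyc y p (y p)" using assms less_Iinv_iff y_inv by blast
  show p: "p \<in> {lo..hi}" using Icyc_pullback(1)[OF cyc] .
  have "Icyc z (\<phi> p) (z (\<phi> p))" using Icyc_pullback(3)[OF cyc] commute[OF p] by simp
  then show "\<phi> p < Iinv z (\<phi> p)" using less_Iinv_iff z_inv by blast
qed

lemma I_grassmannian_Iinv_pullback:
  assumes "I_grassmannian (Iinv z)"
  shows "I_grassmannian (Iinv y)"
proof (rule I_grassmannianI)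
  note descent = Iinv_descent_pullback and ascent = Iinv_ascent_pullback
  note less_iff = strict_mono_on_less[OF mono]
  show "Iinv y (Iinv y i) = i" for i by (rule Iinv_involution[OF y_inv])
  have "{q. Iinv y q < q} \<subseteq> {lo..hi}" using descent(1) by blast
  then show "finite {q. Iinv y q < q}" by (rule finite_subset) simp
  show "Iinv y x < x" if q: "Iinv y q < q" and q': "Iinv y q' < q'" and "q < x" "x < q'" for q q' x
  proof -
    have x: "x \<in> {lo..hi}" using descent(1)[OF q] descent(1)[OF q'] that by auto
    have "\<phi> q < \<phi> x" "\<phi> x < \<phi> q'"
      using less_iff descent(1)[OF q] descent(1)[OF q'] x that by simp_all
    then have "Iinv z (\<phi> x) < \<phi> x"
      using I_grassmannian_descents_convex[OF assms descent(5)[OF q] descent(5)[OF q']] by blast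
    moreover have Zx: "Iinv z (\<phi> x) = \<phi> (y x)"
      using calculation Iinv_eq_if_moved commute[OF x] by force
    ultimately have "\<phi> (y x) < \<phi> x" by simp
    then have "y x < x" using less_iff maps[OF x] x by blast
    have "Iinv z (\<phi> x) < \<phi> q"
      using I_grassmannian_ascent_less_descent[OF assms _ descent(5)[OF q]]
        I_grassmannian_involution[OF assms] \<open>Iinv z (\<phi> x) < \<phi> x\<close> by metis
    then have "\<phi> (y x) < \<phi> q" using Zx by simp
    then have "y x < q" using less_iff maps[OF x] descent(1)[OF q] by blast
    have "Icyc y (y x) x"
      unfolding Icyc_def using y_inv q descent(3)[OF q] \<open>y x < x\<close> \<open>y x < q\<close> \<open>q < x\<close>
      by (intro conjI exI[of _ "y q"] exI[of _ q]) auto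
    then show ?thesis using Iinv_less_iff y_inv by blast
  qed
  show "p < q" if p: "p < Iinv y p" and q: "Iinv y q < q" for p q
  proof -
    have "\<phi> p < \<phi> q"
      using I_grassmannian_ascent_less_descent[OF assms ascent(2)[OF p] descent(5)[OF q]] .
    then show ?thesis using less_iff ascent(1)[OF p] descent(1)[OF q] by simp
  qed
  show "Iinv y q < Iinv y q'" if q: "Iinv y q < q" and q': "Iinv y q' < q'" and "q < q'" for q q'
  proof -
    have "\<phi> q < \<phi> q'" using less_iff descent(1)[OF q] descent(1)[OF q'] \<open>q < q'\<close> by simp
    then have "\<phi> (y q) < \<phi> (y q')"
      using I_grassmannian_descents_mono[OF assms descent(5)[OF q] descent(5)[OF q']]
        descent(4)[OF q] descent(4)[OF q'] by simp
    then show ?thesis using less_iff descent(2,3)[OF q] descent(2,3)[OF q'] by simp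
  qed
qed

end

lemma Theta_notin_interval:
  assumes "even m" "i \<notin> {1..m}"
  shows "Theta i \<notin> {1..m}"
  using assms unfolding Theta_def by auto presburger+

lemma Icyc_restrict_std_mem:
  assumes "Icyc (restrict_std z E) p q"
  shows "p \<in> {1..int (card E)}"
proof (rule ccontr)
  assume "p \<notin> {1..int (card E)}"
  then have "q = Theta p" using assms unfolding Icyc_def restrict_std_def by auto
  moreover obtain b where "p < b" "b < q" using assms unfolding Icyc_def by blast
  ultimately show False unfolding Theta_def by (auto split: if_splits)
qed

context
  fixes z :: "int \<Rightarrow> int" and E :: "int set"
  assumes E_finite: "finite E" and invariant: "z ` E = E"
begin

lemma restrict_std_inside:
  assumes "i \<in> {1..int (card E)}"
  shows "restrict_std z E i \<in> {1..int (card E)}" "phiE E (restrict_std z E i) = z (phiE E i)"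
proof -
  have "z (phiE E i) \<in> E"
    using phiE_image[OF E_finite] invariant assms by blast
  then show "restrict_std z E i \<in> {1..int (card E)}" "phiE E (restrict_std z E i) = z (phiE E i)"
    using assms psiE_mem[OF E_finite] phiE_psiE[OF E_finite] unfolding restrict_std_def by auto
qed

lemma restrict_std_in_FZ:
  assumes z_inv: "\<And>i. z (z i) = i" and z_fpf: "\<And>i. z i \<noteq> i"
  shows "restrict_std z E \<in> FZ"
proof (rule FZ_intro)
  let ?y = "restrict_std z E" and ?m = "int (card E)"
  have "even (card E)"
    using even_card_if_fpf_involution_invariant[OF E_finite _ z_inv z_fpf] invariant by blast
  then have outside: "?y i = Theta i" "Theta i \<notin> {1..?m}" if "i \<notin> {1..?m}" for i
    using that Theta_notin_interval unfolding restrict_std_def by auto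
  have "{i. ?y i \<noteq> Theta i} \<subseteq> {1..?m}" using outside by blast
  then show "finite {i. ?y i \<noteq> Theta i}" by (rule finite_subset) simp
  show "?y (?y i) = i" for i
  proof (cases "i \<in> {1..?m}")
    case True
    have "phiE E (?y (?y i)) = phiE E i"
      using restrict_std_inside[OF True] restrict_std_inside[of "?y i"] z_inv by simp
    then show ?thesis
      using strict_mono_on_eqD[OF phiE_strict_mono[OF E_finite]] restrict_std_inside True by metis
  next
    case False
    then show ?thesis using outside[OF False] outside(1)[of "Theta i"] by simp
  qed
  show "?y i \<noteq> i" for i
  proof (cases "i \<in> {1..?m}")
    case True
    then show ?thesis using restrict_std_inside[OF True] z_fpf by metis
  qed (simp add: outside Theta_neq)
qed

end

theorem lemma3p33:
  fixes z :: "int \<Rightarrow> int" and E :: "int set"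
  assumes "FPF_grassmannian z" and "finite E" and "z ` E = E"
  shows "FPF_grassmannian (restrict_std z E)"
proof -
  have z: "z \<in> FZ" "I_grassmannian (Iinv z)" using assms(1) unfolding FPF_grassmannian_def by auto
  have y: "restrict_std z E \<in> FZ"
    using assms(2,3) FZ_involution[OF z(1)] FZ_no_fixpoint[OF z(1)] by (rule restrict_std_in_FZ)
  have "I_grassmannian (Iinv (restrict_std z E))"
    using FZ_involution[OF y] FZ_involution[OF z(1)] phiE_strict_mono[OF assms(2)]
      restrict_std_inside[OF assms(2,3)] Icyc_restrict_std_mem z(2)
    by (rule I_grassmannian_Iinv_pullback)
  then show ?thesis using y unfolding FPF_grassmannian_def by simp
qed

end
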